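(* Let $G$ be a simple graph on $n$ vertices with $cM_2(G)\ge cM_2(H)$ for every simple graph $H$ on $n$ vertices, and let $F$, $X$, $Y$, $N^+_F$ be as defined in the context. If $u,v\in X$ and $d_G(u)\ge d_G(v)$, then $N^+_F(u)\cap Y\supseteq N^+_F(v)\cap Y$.
   Context: All graphs are finite and simple; $d_G(u)$ is the degree of $u$ and $cM_2(G)=\sum_{uv\in E(G)}|d_G(u)^2-d_G(v)^2|$. The canonical mixed graph $F$ of $G$ has vertex set $V(G)$; for each edge $uv\in E(G)$: if $d_G(u)>d_G(v)$ then $F$ contains the arc $\overrightarrow{uv}$, and if $d_G(u)=d_G(v)$ then $F$ contains the undirected edge $uv$. $d^+_F(u)$ (resp. $d^-_F(u)$) is the number of arcs of $F$ with tail (resp. head) $u$; $N^+_F(u)=\{w:\overrightarrow{uw}\in A(F)\}$. $X=\{u\in V(G): d^+_F(u)\ge d^-_F(u)\}$ and $Y=\{u\in V(G): d^+_F(u)< d^-_F(u)\}$. *)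

theory Defs
  imports Main
begin

definition simple_graph :: "nat \<Rightarrow> nat set set \<Rightarrow> bool" where
  "simple_graph n E \<longleftrightarrow> E \<subseteq> {{a, b} | a b. a \<noteq> b \<and> a < n \<and> b < n}"

definition deg :: "nat set set \<Rightarrow> nat \<Rightarrow> nat" where
  "deg E u = card {e \<in> E. u \<in> e}"

text \<open>cM_2(G) = sum over edges uv of |d(u)^2 - d(v)^2|; each edge {a,b} is counted once
  via its orientation a < b.\<close>
definition cM2 :: "nat set set \<Rightarrow> int" where
  "cM2 E = (\<Sum>(a, b) \<in> {(a, b). {a, b} \<in> E \<and> a < b}.
              \<bar>int (deg E a) ^ 2 - int (deg E b) ^ 2\<bar>)"

text \<open>Canonical mixed graph F: arc u -> w iff uw is an edge and d(u) > d(w).\<close>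
definition out_nbrs :: "nat set set \<Rightarrow> nat \<Rightarrow> nat set" where
  "out_nbrs E u = {w. {u, w} \<in> E \<and> deg E u > deg E w}"

definition in_nbrs :: "nat set set \<Rightarrow> nat \<Rightarrow> nat set" where
  "in_nbrs E u = {w. {u, w} \<in> E \<and> deg E w > deg E u}"

definition outdeg :: "nat set set \<Rightarrow> nat \<Rightarrow> nat" where
  "outdeg E u = card (out_nbrs E u)"

definition indeg :: "nat set set \<Rightarrow> nat \<Rightarrow> nat" where
  "indeg E u = card (in_nbrs E u)"

definition Xset :: "nat \<Rightarrow> nat set set \<Rightarrow> nat set" where
  "Xset n E = {u. u < n \<and> outdeg E u \<ge> indeg E u}"

definition Yset :: "nat \<Rightarrow> nat set set \<Rightarrow> nat set" where
  "Yset n E = {u. u < n \<and> outdeg E u < indeg E u}"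

end

theory Submission
  imports Defs
begin

text \<open>Suppose \<open>v \<rightarrow> w\<close> is an arc but \<open>uw\<close> is not an edge. Since \<open>d(u) \<ge> d(v)\<close> and \<open>w\<close> is a
  neighbour of \<open>v\<close> only, \<open>u\<close> has a neighbour \<open>x \<noteq> v\<close> that is not adjacent to \<open>v\<close>. Moving the
  edge \<open>vw\<close> to \<open>uw\<close>, or the edge \<open>ux\<close> to \<open>vx\<close>, gives simple graphs whose \<open>cM\<^sub>2\<close> is at most
  that of \<open>G\<close>. A move lowers one degree and raises another by one, and raising (lowering) a
  vertex of degree \<open>d\<close> changes \<open>|d\<^sup>2 - d(b)\<^sup>2|\<close> by at least \<open>2d + 1\<close> (\<open>-(2d - 1)\<close>) times
  the sign of \<open>d - d(b)\<close>. Summed over the neighbours this bounds each change of \<open>cM\<^sub>2\<close>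
  from below in terms of \<open>d\<^sup>+ - d\<^sup>-\<close> at \<open>u\<close> and \<open>v\<close>, which is nonnegative on \<open>X\<close>, and the two
  bounds cannot both be nonpositive.\<close>

definition nbrs :: "nat set set \<Rightarrow> nat \<Rightarrow> nat set" where
  "nbrs E z = {b. {z, b} \<in> E}"

definition edge_weight :: "(nat \<Rightarrow> nat) \<Rightarrow> nat set \<Rightarrow> int" where
  "edge_weight f e = \<bar>int (f (Min e)) ^ 2 - int (f (Max e)) ^ 2\<bar>"

definition balance :: "nat set set \<Rightarrow> (nat \<Rightarrow> nat) \<Rightarrow> nat \<Rightarrow> int" where
  "balance E f z = (\<Sum>b\<in>nbrs E z. sgn (int (f z) - int (f b)))"

definition move_edge :: "nat \<Rightarrow> nat \<Rightarrow> nat \<Rightarrow> nat set set \<Rightarrow> nat set set" where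
  "move_edge p q r E = insert {q, r} (E - {{p, r}})"

lemma simple_graph_edgeD:
  assumes "simple_graph n E" "{a, b} \<in> E"
  shows "a \<noteq> b" "a < n" "b < n"
  using assms unfolding simple_graph_def by (auto simp: doubleton_eq_iff)

lemma simple_graph_edgeE:
  assumes "simple_graph n E" "e \<in> E"
  obtains a b where "e = {a, b}" "a \<noteq> b"
  using assms unfolding simple_graph_def by blast

lemma finite_edges:
  assumes "simple_graph n E"
  shows "finite E"
proof (rule finite_subset)
  show "E \<subseteq> (\<lambda>(a, b). {a, b}) ` ({..<n} \<times> {..<n})"
    using assms unfolding simple_graph_def by fastforce
qed simp

lemma nbrs_subset:
  assumes "simple_graph n E"
  shows "nbrs E z \<subseteq> {..<n}"
  using simple_graph_edgeD[OF assms] by (auto simp: nbrs_def)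

lemma finite_nbrs: "simple_graph n E \<Longrightarrow> finite (nbrs E z)"
  by (rule finite_subset[OF nbrs_subset]) simp_all

lemma not_in_nbrs_self: "simple_graph n E \<Longrightarrow> z \<notin> nbrs E z"
  using simple_graph_edgeD(1)[of n E z z] by (auto simp: nbrs_def)

lemma in_nbrs_commute: "a \<in> nbrs E b \<longleftrightarrow> b \<in> nbrs E a"
  by (simp add: nbrs_def insert_commute)

lemma bij_betw_nbrs_incident_edges:
  assumes "simple_graph n E"
  shows "bij_betw (\<lambda>b. {z, b}) (nbrs E z) {e \<in> E. z \<in> e}"
proof (rule bij_betw_imageI)
  show "inj_on (\<lambda>b. {z, b}) (nbrs E z)"
    by (auto simp: inj_on_def doubleton_eq_iff)
  show "(\<lambda>b. {z, b}) ` nbrs E z = {e \<in> E. z \<in> e}"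
  proof (intro equalityI subsetI)
    fix e assume "e \<in> {e \<in> E. z \<in> e}"
    with assms obtain a b where "e = {a, b}" "e \<in> E" "z \<in> e"
      by (blast elim: simple_graph_edgeE)
    then show "e \<in> (\<lambda>b. {z, b}) ` nbrs E z"
      by (auto simp: nbrs_def image_iff insert_commute)
  qed (auto simp: nbrs_def)
qed

lemma deg_eq_card_nbrs: "simple_graph n E \<Longrightarrow> deg E z = card (nbrs E z)"
  unfolding deg_def using bij_betw_same_card[OF bij_betw_nbrs_incident_edges] by simp

lemma edge_weight_doubleton: "edge_weight f {a, b} = \<bar>int (f a) ^ 2 - int (f b) ^ 2\<bar>"
  by (cases a b rule: linorder_cases) (auto simp: edge_weight_def max_def min_def)

lemma cM2_eq_sum_edge_weight:
  assumes "simple_graph n E"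
  shows "cM2 E = (\<Sum>e\<in>E. edge_weight (deg E) e)"
proof -
  let ?pairs = "{(a, b). {a, b} \<in> E \<and> a < b}"
  have "bij_betw (\<lambda>(a, b). {a, b}) ?pairs E"
  proof (rule bij_betw_imageI)
    show "inj_on (\<lambda>(a, b). {a, b}) ?pairs"
      by (auto simp: inj_on_def doubleton_eq_iff)
    show "(\<lambda>(a, b). {a, b}) ` ?pairs = E"
    proof (intro equalityI subsetI)
      fix e assume "e \<in> E"
      with assms obtain a b where "e = {a, b}" "a \<noteq> b" by (blast elim: simple_graph_edgeE)
      with \<open>e \<in> E\<close> show "e \<in> (\<lambda>(a, b). {a, b}) ` ?pairs"
        by (intro image_eqI[of _ _ "(min a b, max a b)"]) (auto simp: min_def max_def insert_commute)
    qed auto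
  qed
  then have "(\<Sum>x\<in>?pairs. edge_weight (deg E) (case x of (a, b) \<Rightarrow> {a, b})) = (\<Sum>e\<in>E. edge_weight (deg E) e)"
    by (rule sum.reindex_bij_betw)
  moreover have "cM2 E = (\<Sum>x\<in>?pairs. edge_weight (deg E) (case x of (a, b) \<Rightarrow> {a, b}))"
    unfolding cM2_def by (rule sum.cong) (auto simp: edge_weight_doubleton)
  ultimately show ?thesis by simp
qed

lemma sum_edge_weight_move_edge:
  assumes "finite E" "{p, r} \<in> E" "{q, r} \<notin> E"
  shows "(\<Sum>e\<in>move_edge p q r E. edge_weight f e)
    = (\<Sum>e\<in>E. edge_weight f e) - edge_weight f {p, r} + edge_weight f {q, r}"
  using assms by (auto simp: move_edge_def sum_diff1)

lemma sum_edge_weight_fun_upd: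
  assumes sg: "simple_graph n E"
  shows "(\<Sum>e\<in>E. edge_weight (f(z := k)) e) = (\<Sum>e\<in>E. edge_weight f e)
    + (\<Sum>b\<in>nbrs E z. \<bar>int k ^ 2 - int (f b) ^ 2\<bar> - \<bar>int (f z) ^ 2 - int (f b) ^ 2\<bar>)"
proof -
  let ?I = "{e \<in> E. z \<in> e}"
  have incident: "(\<Sum>e\<in>?I. edge_weight g e) = (\<Sum>b\<in>nbrs E z. \<bar>int (g z) ^ 2 - int (g b) ^ 2\<bar>)" for g
    using sum.reindex_bij_betw[OF bij_betw_nbrs_incident_edges[OF sg], of "edge_weight g"]
    by (simp add: edge_weight_doubleton)
  have away: "edge_weight (f(z := k)) e = edge_weight f e" if "e \<in> E - ?I" for e
  proof -
    from sg that obtain a b where e: "e = {a, b}" by (blast elim: simple_graph_edgeE)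
    with that have "a \<noteq> z" "b \<noteq> z" by auto
    with e show ?thesis by (simp add: edge_weight_doubleton)
  qed
  have split: "(\<Sum>e\<in>E. edge_weight g e) = (\<Sum>e\<in>E - ?I. edge_weight g e) + (\<Sum>e\<in>?I. edge_weight g e)" for g
    by (rule sum.subset_diff) (use finite_edges[OF sg] in auto)
  have "(\<Sum>b\<in>nbrs E z. \<bar>int ((f(z := k)) z) ^ 2 - int ((f(z := k)) b) ^ 2\<bar>)
      = (\<Sum>b\<in>nbrs E z. \<bar>int k ^ 2 - int (f b) ^ 2\<bar>)"
    using not_in_nbrs_self[OF sg] by (intro sum.cong) auto
  then show ?thesis
    using split[of "f(z := k)"] split[of f] incident[of "f(z := k)"] incident[of f] away
    by (simp add: sum_subtractf)
qed

lemma abs_sq_diff_succ_ge: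
  fixes x y :: int
  assumes "0 \<le> x" "0 \<le> y"
  shows "(2 * x + 1) * sgn (x - y) \<le> \<bar>(x + 1) ^ 2 - y ^ 2\<bar> - \<bar>x ^ 2 - y ^ 2\<bar>"
proof (cases x y rule: linorder_cases)
  case less
  then have "(x + 1) ^ 2 \<le> y ^ 2" "x ^ 2 \<le> y ^ 2"
    using assms by (auto intro: power_mono)
  with less show ?thesis by (simp add: power2_eq_square algebra_simps)
next
  case greater
  then have "y ^ 2 \<le> x ^ 2"
    using assms by (auto intro: power_mono)
  with greater assms show ?thesis by (simp add: power2_eq_square algebra_simps)
qed (simp add: power2_eq_square algebra_simps assms)

lemma abs_sq_diff_pred_ge:
  fixes x y :: int
  assumes "1 \<le> x" "0 \<le> y"
  shows "- (2 * x - 1) * sgn (x - y) \<le> \<bar>(x - 1) ^ 2 - y ^ 2\<bar> - \<bar>x ^ 2 - y ^ 2\<bar>"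
proof (cases x y rule: linorder_cases)
  case less
  then have "(x - 1) ^ 2 \<le> y ^ 2" "x ^ 2 \<le> y ^ 2"
    using assms by (auto intro: power_mono)
  with less show ?thesis by (simp add: power2_eq_square algebra_simps)
next
  case greater
  then have "y ^ 2 \<le> (x - 1) ^ 2"
    using assms by (auto intro: power_mono)
  with greater assms show ?thesis by (simp add: power2_eq_square algebra_simps)
qed simp

lemma sum_edge_weight_incr_ge:
  assumes sg: "simple_graph n E"
  shows "(2 * int (f z) + 1) * balance E f z
    \<le> (\<Sum>e\<in>E. edge_weight (f(z := f z + 1)) e) - (\<Sum>e\<in>E. edge_weight f e)"
proof -
  have "(2 * int (f z) + 1) * balance E f z = (\<Sum>b\<in>nbrs E z. (2 * int (f z) + 1) * sgn (int (f z) - int (f b)))"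
    by (simp add: balance_def sum_distrib_left)
  also have "\<dots> \<le> (\<Sum>b\<in>nbrs E z. \<bar>int (f z + 1) ^ 2 - int (f b) ^ 2\<bar> - \<bar>int (f z) ^ 2 - int (f b) ^ 2\<bar>)"
  proof (rule sum_mono)
    fix b
    show "(2 * int (f z) + 1) * sgn (int (f z) - int (f b))
      \<le> \<bar>int (f z + 1) ^ 2 - int (f b) ^ 2\<bar> - \<bar>int (f z) ^ 2 - int (f b) ^ 2\<bar>"
      using abs_sq_diff_succ_ge[of "int (f z)" "int (f b)"] by (simp add: ac_simps)
  qed
  finally show ?thesis
    using sum_edge_weight_fun_upd[OF sg, of f z "f z + 1"] by simp
qed

lemma sum_edge_weight_decr_ge:
  assumes sg: "simple_graph n E" and "1 \<le> f z"
  shows "- (2 * int (f z) - 1) * balance E f z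
    \<le> (\<Sum>e\<in>E. edge_weight (f(z := f z - 1)) e) - (\<Sum>e\<in>E. edge_weight f e)"
proof -
  have "- (2 * int (f z) - 1) * balance E f z = (\<Sum>b\<in>nbrs E z. - (2 * int (f z) - 1) * sgn (int (f z) - int (f b)))"
    by (simp add: balance_def sum_distrib_left)
  also have "\<dots> \<le> (\<Sum>b\<in>nbrs E z. \<bar>int (f z - 1) ^ 2 - int (f b) ^ 2\<bar> - \<bar>int (f z) ^ 2 - int (f b) ^ 2\<bar>)"
    using abs_sq_diff_pred_ge \<open>1 \<le> f z\<close> by (intro sum_mono) (simp add: of_nat_diff)
  finally show ?thesis
    using sum_edge_weight_fun_upd[OF sg, of f z "f z - 1"] by simp
qed

lemma balance_antimono:
  assumes "\<And>b. g b \<le> f b" "g z = f z"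
  shows "balance E f z \<le> balance E g z"
  unfolding balance_def
proof (rule sum_mono)
  fix b
  have "int (f z) - int (f b) \<le> int (g z) - int (g b)"
    using assms(1)[of b] assms(2) by simp
  then show "sgn (int (f z) - int (f b)) \<le> sgn (int (g z) - int (g b))"
    by (simp add: sgn_if)
qed

lemma balance_deg:
  assumes sg: "simple_graph n E"
  shows "balance E (deg E) z = int (outdeg E z) - int (indeg E z)"
proof -
  have "out_nbrs E z = nbrs E z \<inter> {b. b \<in> out_nbrs E z}" "in_nbrs E z = nbrs E z \<inter> {b. b \<in> in_nbrs E z}"
    by (auto simp: nbrs_def out_nbrs_def in_nbrs_def)
  then have "(\<Sum>b\<in>nbrs E z. of_bool (b \<in> out_nbrs E z) - of_bool (b \<in> in_nbrs E z))
      = int (outdeg E z) - int (indeg E z)"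
    using finite_nbrs[OF sg] by (simp add: sum_subtractf outdeg_def indeg_def)
  moreover have "balance E (deg E) z
      = (\<Sum>b\<in>nbrs E z. of_bool (b \<in> out_nbrs E z) - of_bool (b \<in> in_nbrs E z))"
    unfolding balance_def by (intro sum.cong) (auto simp: sgn_if nbrs_def out_nbrs_def in_nbrs_def)
  ultimately show ?thesis by simp
qed

lemma simple_graph_move_edge:
  assumes "simple_graph n E" "q \<noteq> r" "q < n" "r < n"
  shows "simple_graph n (move_edge p q r E)"
  using assms unfolding simple_graph_def move_edge_def by blast

lemma nbrs_move_edge:
  assumes sg: "simple_graph n E" and "{p, r} \<in> E" "{q, r} \<notin> E" "q \<noteq> p" "q \<noteq> r"
  shows "nbrs (move_edge p q r E) p = nbrs E p - {r}"
    and "nbrs (move_edge p q r E) q = insert r (nbrs E q)"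
    and "nbrs (move_edge p q r E) r = insert q (nbrs E r - {p})"
    and "z \<notin> {p, q, r} \<Longrightarrow> nbrs (move_edge p q r E) z = nbrs E z"
  using assms simple_graph_edgeD(1)[OF sg \<open>{p, r} \<in> E\<close>]
  by (auto simp: nbrs_def move_edge_def doubleton_eq_iff)

lemma deg_move_edge:
  assumes sg: "simple_graph n E" and pr: "{p, r} \<in> E" and "{q, r} \<notin> E" "q \<noteq> p" "q \<noteq> r" "q < n"
  shows "deg (move_edge p q r E) = (deg E)(p := deg E p - 1, q := deg E q + 1)"
proof
  fix z
  have sgH: "simple_graph n (move_edge p q r E)"
    using simple_graph_move_edge assms simple_graph_edgeD(3)[OF sg pr] by blast
  have r_nbr: "r \<in> nbrs E p" "p \<in> nbrs E r" and q_nbr: "r \<notin> nbrs E q" "q \<notin> nbrs E r"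
    using assms by (auto simp: nbrs_def insert_commute)
  note card_nbrs = deg_eq_card_nbrs[OF sg] deg_eq_card_nbrs[OF sgH] finite_nbrs[OF sg]
  consider "z = p" | "z = q" | "z = r" | "z \<notin> {p, q, r}" by blast
  then show "deg (move_edge p q r E) z = ((deg E)(p := deg E p - 1, q := deg E q + 1)) z"
  proof cases
    case 3
    have "0 < card (nbrs E r)" using r_nbr card_nbrs card_gt_0_iff by blast
    moreover have "deg (move_edge p q r E) r = Suc (card (nbrs E r - {p}))"
      using assms q_nbr card_nbrs by (simp add: nbrs_move_edge)
    ultimately show ?thesis
      using 3 assms simple_graph_edgeD(1)[OF sg pr] r_nbr card_nbrs by simp
  qed (use assms r_nbr q_nbr card_nbrs in \<open>simp_all add: nbrs_move_edge\<close>)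
qed

text \<open>Swap the edge with the degrees frozen, then lower the label of \<open>p\<close> and raise that of
  \<open>q\<close>; raising \<open>q\<close> after \<open>p\<close> has been lowered only helps, by \<open>balance_antimono\<close>.\<close>

lemma cM2_move_edge_ge:
  fixes E :: "nat set set" and p q r :: nat
  defines "P \<equiv> int (deg E p)" and "Q \<equiv> int (deg E q)" and "R \<equiv> int (deg E r)"
  assumes sg: "simple_graph n E" and pr: "{p, r} \<in> E" and qr: "{q, r} \<notin> E"
    and qp: "q \<noteq> p" and q_ne_r: "q \<noteq> r" and q_lt: "q < n"
  shows "\<bar>Q ^ 2 - R ^ 2\<bar> - \<bar>P ^ 2 - R ^ 2\<bar> - (2 * P - 1) * (balance E (deg E) p - sgn (P - R))
      + (2 * Q + 1) * (balance E (deg E) q + sgn (Q - R))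
    \<le> cM2 (move_edge p q r E) - cM2 E"
proof -
  define H where "H = move_edge p q r E"
  define d where "d = deg E"
  define d' where "d' = d(p := d p - 1)"
  have sgH: "simple_graph n H"
    unfolding H_def using simple_graph_move_edge assms simple_graph_edgeD(3)[OF sg pr] by blast
  have "r \<in> nbrs E p" "r \<notin> nbrs E q" using pr qr by (auto simp: nbrs_def)
  then have "1 \<le> d p"
    using finite_nbrs[OF sg] by (auto simp: d_def deg_eq_card_nbrs[OF sg] Suc_le_eq card_gt_0_iff)
  have deg_H: "deg H = d'(q := d' q + 1)"
    using deg_move_edge[OF sg pr qr qp q_ne_r q_lt] \<open>q \<noteq> p\<close> by (simp add: H_def d_def d'_def)
  have swap: "(\<Sum>e\<in>H. edge_weight d e) = cM2 E - \<bar>P ^ 2 - R ^ 2\<bar> + \<bar>Q ^ 2 - R ^ 2\<bar>"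
    using sum_edge_weight_move_edge[OF finite_edges[OF sg] pr qr]
    by (simp add: H_def d_def P_def Q_def R_def cM2_eq_sum_edge_weight[OF sg] edge_weight_doubleton)
  have decr: "- (2 * P - 1) * balance H d p \<le> (\<Sum>e\<in>H. edge_weight d' e) - (\<Sum>e\<in>H. edge_weight d e)"
    using sum_edge_weight_decr_ge[OF sgH, of d p] \<open>1 \<le> d p\<close> by (simp add: P_def d_def d'_def of_nat_diff)
  have incr: "(2 * Q + 1) * balance H d' q \<le> cM2 H - (\<Sum>e\<in>H. edge_weight d' e)"
    using sum_edge_weight_incr_ge[OF sgH, of d' q] \<open>q \<noteq> p\<close>
    by (simp add: cM2_eq_sum_edge_weight[OF sgH] deg_H Q_def d_def d'_def)
  have mono: "(2 * Q + 1) * balance H d q \<le> (2 * Q + 1) * balance H d' q"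
    using balance_antimono[of d' d q H] \<open>q \<noteq> p\<close> by (intro mult_left_mono) (auto simp: d'_def Q_def)
  have balance_p: "balance H d p = balance E d p - sgn (P - R)"
    using \<open>r \<in> nbrs E p\<close> finite_nbrs[OF sg]
    by (simp add: balance_def H_def nbrs_move_edge[OF sg pr qr qp q_ne_r] sum_diff1 P_def R_def d_def)
  have balance_q: "balance H d q = balance E d q + sgn (Q - R)"
    using \<open>r \<notin> nbrs E q\<close> finite_nbrs[OF sg]
    by (simp add: balance_def H_def nbrs_move_edge[OF sg pr qr qp q_ne_r] Q_def R_def d_def)
  show ?thesis
    using swap decr[unfolded balance_p] incr mono[unfolded balance_q]
    unfolding H_def d_def by linarith
qed

lemma exists_nbr_not_nbr:
  assumes sg: "simple_graph n E" and "deg E v \<le> deg E u"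
    and "w \<in> nbrs E v" "w \<notin> nbrs E u" "w \<noteq> u"
  shows "\<exists>x \<in> nbrs E u. x \<notin> nbrs E v \<and> x \<noteq> v"
proof (rule ccontr)
  assume "\<not> ?thesis"
  then have common: "x \<in> nbrs E v" if "x \<in> nbrs E u" "x \<noteq> v" for x
    using that by blast
  let ?swap = "\<lambda>x. if x = v then u else x"
  have "inj_on ?swap (nbrs E u)"
    using not_in_nbrs_self[OF sg, of u] by (auto simp: inj_on_def)
  moreover have "?swap ` nbrs E u \<subseteq> nbrs E v - {w}"
    using common assms(4,5) in_nbrs_commute[of v E u] by auto
  ultimately have "card (nbrs E u) \<le> card (nbrs E v - {w})"
    using finite_nbrs[OF sg] by (meson card_inj_on_le finite_Diff)
  also have "\<dots> < card (nbrs E v)"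
    using finite_nbrs[OF sg] \<open>w \<in> nbrs E v\<close> by (rule card_Diff1_less)
  finally show False
    using \<open>deg E v \<le> deg E u\<close> by (simp add: deg_eq_card_nbrs[OF sg])
qed

text \<open>The hypotheses are the bounds of \<open>cM2_move_edge_ge\<close> for moving \<open>vw\<close> to \<open>uw\<close> and \<open>ux\<close>
  to \<open>vx\<close>, where \<open>U, V, W, X\<close> are the degrees of \<open>u, v, w, x\<close> and \<open>a, b\<close> the balances of
  \<open>u, v\<close>.\<close>

lemma move_bounds_incompatible:
  fixes U V W X a b :: int
  assumes "0 \<le> W" "W < V" "V \<le> U" "0 \<le> X" "0 \<le> a" "0 \<le> b"
    and move1: "\<bar>U ^ 2 - W ^ 2\<bar> - \<bar>V ^ 2 - W ^ 2\<bar> - (2 * V - 1) * (b - sgn (V - W))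
      + (2 * U + 1) * (a + sgn (U - W)) \<le> 0"
    and move2: "\<bar>V ^ 2 - X ^ 2\<bar> - \<bar>U ^ 2 - X ^ 2\<bar> - (2 * U - 1) * (a - sgn (U - X))
      + (2 * V + 1) * (b + sgn (V - X)) \<le> 0"
  shows False
proof -
  have squares: "W ^ 2 < V ^ 2" "V ^ 2 \<le> U ^ 2"
    using assms by (auto intro: power_strict_mono power_mono)
  then have move1': "U ^ 2 - V ^ 2 - (2 * V - 1) * (b - 1) + (2 * U + 1) * (a + 1) \<le> 0"
    using move1 assms by simp
  have "1 \<le> b"
  proof (rule ccontr)
    assume "\<not> 1 \<le> b"
    with \<open>0 \<le> b\<close> have "b = 0" by simp
    with move1' have "U ^ 2 - V ^ 2 + (2 * V - 1) + (2 * U + 1) * (a + 1) \<le> 0" by simp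
    moreover have "0 < (2 * U + 1) * (a + 1)" using assms by simp
    ultimately show False using squares assms by linarith
  qed
  have sum: "U ^ 2 - V ^ 2 + 2 * a + 2 * b + 2 * U + 2 * V + \<bar>V ^ 2 - X ^ 2\<bar> - \<bar>U ^ 2 - X ^ 2\<bar>
      + (2 * U - 1) * sgn (U - X) + (2 * V + 1) * sgn (V - X) \<le> 0"
    using move1' move2 by (simp add: algebra_simps)
  consider "X \<le> V" | "V < X" "X < U" | "U \<le> X" by linarith
  then show False
  proof cases
    case 1
    then have "X ^ 2 \<le> V ^ 2" using assms by (simp add: power_mono)
    moreover have "0 \<le> (2 * U - 1) * sgn (U - X)" "0 \<le> (2 * V + 1) * sgn (V - X)"
      using 1 assms by (auto simp: sgn_if)
    ultimately show False using sum squares assms by linarith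
  next
    case 2
    then have "V ^ 2 < X ^ 2" "X ^ 2 < U ^ 2" using assms by (auto intro: power_strict_mono)
    with 2 sum assms show False by simp
  next
    case 3
    then have "U ^ 2 \<le> X ^ 2" using assms by (simp add: power_mono)
    moreover have "- (2 * U - 1) \<le> (2 * U - 1) * sgn (U - X)" "- (2 * V + 1) \<le> (2 * V + 1) * sgn (V - X)"
      using 3 assms by (auto simp: sgn_if)
    ultimately show False using sum squares assms \<open>1 \<le> b\<close> by linarith
  qed
qed

lemma out_nbrs_subset_if_cM2_maximal:
  assumes sg: "simple_graph n E"
    and maximal: "\<And>H. simple_graph n H \<Longrightarrow> cM2 E \<ge> cM2 H"
    and u: "u \<in> Xset n E" and v: "v \<in> Xset n E"
    and "deg E u \<ge> deg E v"
  shows "out_nbrs E v \<subseteq> out_nbrs E u"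
proof
  fix w assume "w \<in> out_nbrs E v"
  then have vw: "{v, w} \<in> E" and "deg E w < deg E v" by (auto simp: out_nbrs_def)
  have "{u, w} \<in> E"
  proof (rule ccontr)
    assume uw: "{u, w} \<notin> E"
    have "u \<noteq> w" "u \<noteq> v" using \<open>deg E w < deg E v\<close> \<open>deg E u \<ge> deg E v\<close> vw uw by auto
    then obtain x where ux: "{u, x} \<in> E" and vx: "{v, x} \<notin> E" and "v \<noteq> x"
      using exists_nbr_not_nbr[OF sg \<open>deg E u \<ge> deg E v\<close>, of w] vw uw by (auto simp: nbrs_def)
    have "u < n" "v < n" "0 \<le> balance E (deg E) u" "0 \<le> balance E (deg E) v"
      using u v by (auto simp: Xset_def balance_deg[OF sg])
    have "cM2 (move_edge v u w E) \<le> cM2 E"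
      using maximal simple_graph_move_edge[OF sg \<open>u \<noteq> w\<close> \<open>u < n\<close>] simple_graph_edgeD(3)[OF sg vw]
      by blast
    moreover have "cM2 (move_edge u v x E) \<le> cM2 E"
      using maximal simple_graph_move_edge[OF sg \<open>v \<noteq> x\<close> \<open>v < n\<close>] simple_graph_edgeD(3)[OF sg ux]
      by blast
    ultimately show False
      using move_bounds_incompatible[of "int (deg E w)" "int (deg E v)" "int (deg E u)" "int (deg E x)"
          "balance E (deg E) u" "balance E (deg E) v"]
        cM2_move_edge_ge[OF sg vw uw \<open>u \<noteq> v\<close> \<open>u \<noteq> w\<close> \<open>u < n\<close>]
        cM2_move_edge_ge[OF sg ux vx \<open>u \<noteq> v\<close>[symmetric] \<open>v \<noteq> x\<close> \<open>v < n\<close>]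
        \<open>deg E w < deg E v\<close> \<open>deg E u \<ge> deg E v\<close> \<open>0 \<le> balance E (deg E) u\<close> \<open>0 \<le> balance E (deg E) v\<close>
      by linarith
  qed
  with \<open>deg E w < deg E v\<close> \<open>deg E u \<ge> deg E v\<close> show "w \<in> out_nbrs E u"
    by (auto simp: out_nbrs_def)
qed

theorem claim5:
  fixes n :: nat and E :: "nat set set" and u v :: nat
  assumes "simple_graph n E"
    and "\<And>H. simple_graph n H \<Longrightarrow> cM2 E \<ge> cM2 H"
    and "u \<in> Xset n E" and "v \<in> Xset n E"
    and "deg E u \<ge> deg E v"
  shows "out_nbrs E v \<inter> Yset n E \<subseteq> out_nbrs E u \<inter> Yset n E"
  using out_nbrs_subset_if_cM2_maximal[OF assms] by blast

end
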